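(* For every $m \in \mathbb{N}$, the $m$-uniform hypergraph $\mathcal{H}_m = (V, \mathcal{E}_s \cup \mathcal{E}_p)$ defined below admits no polychromatic coloring with $2$ colors, i.e., for every coloring $\phi\colon V \to \{\text{red},\text{blue}\}$ some hyperedge of $\mathcal{H}_m$ is monochromatic.
   Context: Construction of $\mathcal{H}_m$: first a rooted forest $F_m$ with $m^m$ trees is built, whose vertices are partitioned into "stages"; each stage $S$ carries a total order $<_S$, and all vertices of a stage have the same distance $j$ (the level of $S$) to the root of their tree; a stage on level $j \in \{0,\dots,m-1\}$ has $m^{m-j}$ vertices. Start with $m^m$ roots, which form the unique stage on level $0$, ordered in an arbitrary fixed way. Then, for every already defined stage $S$ on level $j < m-1$ and every subset $S' \subseteq S$ with $|S'| = m^{m-j-1}$, add a new stage $T(S')$ on level $j+1$ consisting of $m^{m-j-1}$ new vertices such that every vertex of $S'$ gets exactly one child from $T(S')$, and order $T(S')$ by $<_{T(S')}$ as their parents are ordered by $<_S$. The hypergraph $\mathcal{H}_m$ has vertex set $V = V(F_m)$ and two kinds of hyperedges: stage-hyperedges $\mathcal{E}_s$, namely for every stage $S$ each set of $m$ consecutive vertices in $<_S$; and path-hyperedges $\mathcal{E}_p$, namely the vertex set of every root-to-leaf path in $F_m$ (leaves are on level $m-1$). A $2$-coloring is polychromatic if every hyperedge contains vertices of both colors. *)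

theory Defs
  imports Main
begin

text \<open>
  A stage on level j is encoded by the list
  As = [A_0, ..., A_(j-1)] of subset choices made along the way: the root stage
  (level 0) is the empty list, and the stage T(S') obtained from stage As by
  choosing the subset S' is As @ [A], where A is the set of positions (w.r.t. the
  order of stage As) of the vertices of S'.  Positions in a stage on level j are
  0 ..< m^(m-j), and the order of a stage is the natural order of positions.
  A vertex is a pair (As, i): the i-th vertex of stage As.  The i-th vertex of
  T(S') is the child of the i-th element of S' (in the order of the parent stage).
\<close>

type_synonym vertex = "nat set list \<times> nat"

definition is_stage :: "nat \<Rightarrow> nat set list \<Rightarrow> bool" where
  "is_stage m As \<longleftrightarrow> length As \<le> m - 1 \<and>
     (\<forall>k < length As. As ! k \<subseteq> {..< m ^ (m - k)} \<and> card (As ! k) = m ^ (m - k - 1))"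

definition level :: "vertex \<Rightarrow> nat" where
  "level v = length (fst v)"

definition vertices :: "nat \<Rightarrow> vertex set" where
  "vertices m = {(As, i). is_stage m As \<and> i < m ^ (m - length As)}"

definition parent :: "vertex \<Rightarrow> vertex" where
  "parent v = (butlast (fst v), sorted_list_of_set (last (fst v)) ! snd v)"

definition stage_edges :: "nat \<Rightarrow> vertex set set" where
  "stage_edges m = {{(As, s + t) | t. t < m} | As s. is_stage m As \<and> s + m \<le> m ^ (m - length As)}"

definition path_edges :: "nat \<Rightarrow> vertex set set" where
  "path_edges m = {{(parent ^^ k) v | k. k \<le> m - 1} | v. v \<in> vertices m \<and> level v = m - 1}"

definition hyperedges :: "nat \<Rightarrow> vertex set set" where
  "hyperedges m = stage_edges m \<union> path_edges m"

datatype color = Red | Blue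

definition polychromatic :: "nat \<Rightarrow> (vertex \<Rightarrow> color) \<Rightarrow> bool" where
  "polychromatic m \<phi> \<longleftrightarrow> (\<forall>e \<in> hyperedges m. (\<exists>x \<in> e. \<phi> x = Red) \<and> (\<exists>x \<in> e. \<phi> x = Blue))"

end

theory Submission
  imports Defs
begin

text \<open>
  Suppose every hyperedge had both colours. Then every block of \<open>m\<close> consecutive vertices of
  a stage contains a red vertex, so a stage of size \<open>m * n\<close> has at least \<open>n\<close> red vertices,
  and these can be chosen as the parents of the next stage. Starting at the roots and always
  choosing red parents yields a stage on level \<open>m - 1\<close> all of whose strict ancestors are red.
  That stage is itself a stage-hyperedge, so it contains a red vertex, and the path from the
  root to it is a red path-hyperedge.
\<close>

lemma card_ge_if_every_block_hit:
  assumes "\<forall>k<n. \<exists>t<m. P (k * m + t)"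
  shows "n \<le> card {i. i < m * n \<and> P i}"
proof -
  obtain f where f: "\<forall>k<n. f k < m \<and> P (k * m + f k)"
    using assms by metis
  define g where "g k = k * m + f k" for k
  have "g k div m = k" if "k < n" for k
  proof -
    have "f k < m"
      using f that by blast
    then show ?thesis
      unfolding g_def by simp
  qed
  then have "inj_on g {..<n}"
    by (metis inj_onI lessThan_iff)
  moreover have "g ` {..<n} \<subseteq> {i. i < m * n \<and> P i}"
  proof clarify
    fix k assume "k < n"
    then have "g k < (k + 1) * m"
      using f unfolding g_def by simp
    also have "\<dots> \<le> m * n"
      using \<open>k < n\<close> mult_le_mono1[of "Suc k" n m] by (simp add: mult.commute)
    finally show "g k < m * n \<and> P (g k)"
      using f \<open>k < n\<close> unfolding g_def by simp
  qed
  ultimately show ?thesis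
    by (metis card_inj_on_le card_lessThan finite_Collect_conjI finite_Collect_less_nat)
qed

lemma is_stage_snoc:
  "is_stage m (As @ [A]) \<longleftrightarrow> is_stage m As \<and> length As < m - 1 \<and>
     A \<subseteq> {..< m ^ (m - length As)} \<and> card A = m ^ (m - length As - 1)"
  unfolding is_stage_def by (auto simp: nth_append less_Suc_eq)

lemma stage_edge_in_stage_edges:
  assumes "is_stage m As" "s + m \<le> m ^ (m - length As)"
  shows "{(As, s + t) | t. t < m} \<in> stage_edges m"
  using assms unfolding stage_edges_def by blast

lemma funpow_parent_snoc:
  "(parent ^^ Suc k) (As @ [A], i) = (parent ^^ k) (As, sorted_list_of_set A ! i)"
  by (simp add: funpow_Suc_right parent_def del: funpow.simps)

definition ancestors_red :: "(vertex \<Rightarrow> color) \<Rightarrow> vertex \<Rightarrow> bool" where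
  "ancestors_red \<phi> v \<longleftrightarrow> (\<forall>k \<in> {1..level v}. \<phi> ((parent ^^ k) v) = Red)"

lemma red_path_if_ancestors_red:
  assumes "\<phi> v = Red" "ancestors_red \<phi> v" "k \<le> level v"
  shows "\<phi> ((parent ^^ k) v) = Red"
proof (cases "k = 0")
  case False
  then have "k \<in> {1..level v}"
    using assms(3) by simp
  then show ?thesis
    using assms(2) unfolding ancestors_red_def by blast
qed (use assms(1) in simp)

lemma ancestors_red_snocI:
  assumes "\<phi> (As, sorted_list_of_set A ! i) = Red" "ancestors_red \<phi> (As, sorted_list_of_set A ! i)"
  shows "ancestors_red \<phi> (As @ [A], i)"
  unfolding ancestors_red_def
proof
  fix k assume "k \<in> {1..level (As @ [A], i)}"
  then obtain k' where k: "k = Suc k'" and "k' \<le> level (As, sorted_list_of_set A ! i)"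
    by (cases k) (auto simp: level_def)
  then show "\<phi> ((parent ^^ k) (As @ [A], i)) = Red"
    unfolding k funpow_parent_snoc using assms red_path_if_ancestors_red by blast
qed

lemma red_in_stage_block:
  assumes red: "\<forall>e \<in> stage_edges m. \<exists>x \<in> e. \<phi> x = Red"
    and "is_stage m As" "s + m \<le> m ^ (m - length As)"
  shows "\<exists>t<m. \<phi> (As, s + t) = Red"
proof -
  have "{(As, s + t) | t. t < m} \<in> stage_edges m"
    using assms(2,3) by (rule stage_edge_in_stage_edges)
  then have "\<exists>x \<in> {(As, s + t) | t. t < m}. \<phi> x = Red"
    using red by (rule bspec[rotated])
  then show ?thesis
    by auto
qed

lemma card_red_in_stage_ge:
  assumes red: "\<forall>e \<in> stage_edges m. \<exists>x \<in> e. \<phi> x = Red"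
    and "is_stage m As" "m \<ge> 1"
  shows "m ^ (m - length As - 1) \<le> card {i. i < m ^ (m - length As) \<and> \<phi> (As, i) = Red}"
proof -
  define n where "n = m ^ (m - length As - 1)"
  have "length As < m"
    using assms(2,3) unfolding is_stage_def by linarith
  then obtain d where "m - length As = Suc d"
    by (metis Suc_diff_Suc)
  then have size: "m ^ (m - length As) = m * n"
    unfolding n_def by simp
  have "\<exists>t<m. \<phi> (As, k * m + t) = Red" if "k < n" for k
  proof (rule red_in_stage_block[OF red \<open>is_stage m As\<close>])
    show "k * m + m \<le> m ^ (m - length As)"
      unfolding size using that mult_le_mono1[of "Suc k" n m] by (simp add: mult.commute)
  qed
  then show ?thesis
    unfolding size n_def[symmetric] by (intro card_ge_if_every_block_hit) blast
qed

lemma stage_with_red_ancestors_exists: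
  assumes red: "\<forall>e \<in> stage_edges m. \<exists>x \<in> e. \<phi> x = Red" and "m \<ge> 1"
  shows "j \<le> m - 1 \<Longrightarrow> \<exists>As. is_stage m As \<and> length As = j \<and>
           (\<forall>i < m ^ (m - j). ancestors_red \<phi> (As, i))"
proof (induction j)
  case 0
  have "is_stage m []" "\<forall>i. ancestors_red \<phi> ([], i)"
    unfolding is_stage_def ancestors_red_def level_def by simp_all
  then show ?case by auto
next
  case (Suc j)
  then obtain As where As: "is_stage m As" "length As = j" "\<forall>i < m ^ (m - j). ancestors_red \<phi> (As, i)"
    using Suc_leD by blast
  define R where "R = {i. i < m ^ (m - j) \<and> \<phi> (As, i) = Red}"
  have "m ^ (m - j - 1) \<le> card R"
    using card_red_in_stage_ge[OF red As(1) \<open>m \<ge> 1\<close>] As(2) unfolding R_def by simp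
  then obtain A where A: "A \<subseteq> R" "card A = m ^ (m - j - 1)" "finite A"
    by (rule obtain_subset_with_card_n)
  have "A \<subseteq> {..< m ^ (m - length As)}"
    using A(1) As(2) unfolding R_def by auto
  then have "is_stage m (As @ [A])"
    using As(1,2) A(2) Suc.prems unfolding is_stage_snoc by simp
  moreover have "ancestors_red \<phi> (As @ [A], i)" if "i < m ^ (m - Suc j)" for i
  proof (rule ancestors_red_snocI)
    have "i < length (sorted_list_of_set A)"
      using that A(2) by simp
    then have "sorted_list_of_set A ! i \<in> set (sorted_list_of_set A)"
      by (rule nth_mem)
    then have "sorted_list_of_set A ! i \<in> A"
      using A(3) by simp
    then show "\<phi> (As, sorted_list_of_set A ! i) = Red" "ancestors_red \<phi> (As, sorted_list_of_set A ! i)"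
      using A(1) As(3) unfolding R_def by auto
  qed
  moreover have "length (As @ [A]) = Suc j"
    using As(2) by simp
  ultimately show ?case
    by blast
qed

lemma red_path_edge_exists:
  assumes red: "\<forall>e \<in> stage_edges m. \<exists>x \<in> e. \<phi> x = Red" and "m \<ge> 1"
  shows "\<exists>e \<in> path_edges m. \<forall>x \<in> e. \<phi> x = Red"
proof -
  obtain As where As: "is_stage m As" "length As = m - 1" "\<forall>i < m. ancestors_red \<phi> (As, i)"
    using stage_with_red_ancestors_exists[OF red \<open>m \<ge> 1\<close>, of "m - 1"] \<open>m \<ge> 1\<close> by auto
  have "1 \<le> card {i. i < m \<and> \<phi> (As, i) = Red}"
    using card_red_in_stage_ge[OF red As(1) \<open>m \<ge> 1\<close>] As(2) \<open>m \<ge> 1\<close> by simp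
  then have "{i. i < m \<and> \<phi> (As, i) = Red} \<noteq> {}"
    by (metis card.empty not_one_le_zero)
  then obtain i where "i < m" "\<phi> (As, i) = Red"
    by blast
  define v where "v = (As, i)"
  have "v \<in> vertices m" "level v = m - 1" "ancestors_red \<phi> v" "\<phi> v = Red"
    using As \<open>i < m\<close> \<open>\<phi> (As, i) = Red\<close> \<open>m \<ge> 1\<close> unfolding vertices_def level_def v_def by auto
  define path where "path = {(parent ^^ k) v | k. k \<le> m - 1}"
  have "path \<in> path_edges m"
    unfolding path_edges_def path_def using \<open>v \<in> vertices m\<close> \<open>level v = m - 1\<close> by blast
  moreover have "\<forall>x \<in> path. \<phi> x = Red"
    unfolding path_def using red_path_if_ancestors_red[OF \<open>\<phi> v = Red\<close> \<open>ancestors_red \<phi> v\<close>] \<open>level v = m - 1\<close>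
    by auto
  ultimately show ?thesis
    by blast
qed

theorem theorem9:
  fixes m :: nat
  assumes "m \<ge> 1"
  shows "\<not> (\<exists>\<phi> :: vertex \<Rightarrow> color. polychromatic m \<phi>)"
proof
  assume "\<exists>\<phi> :: vertex \<Rightarrow> color. polychromatic m \<phi>"
  then obtain \<phi> where poly: "polychromatic m \<phi>" ..
  then have "\<forall>e \<in> stage_edges m. \<exists>x \<in> e. \<phi> x = Red"
    unfolding polychromatic_def hyperedges_def by blast
  then obtain e where e: "e \<in> path_edges m" "\<forall>x \<in> e. \<phi> x = Red"
    using red_path_edge_exists assms by blast
  then obtain x where "x \<in> e" "\<phi> x = Blue"
    using poly unfolding polychromatic_def hyperedges_def by blast
  with e(2) show False
    by simp
qed

end
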